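(* For all $n\ge0$, \[ c_n^2=\delta_{n,0}+c_{n-1}^2+c_{n-3}^2+2\sum_{l=3}^n p_{l-1}c_{n-l}^2 . \]
   Context: The Narayana's cows numbers $c_n$ are defined by $c_n=\delta_{n,0}+c_{n-1}+c_{n-3}$ for $n\ge0$, $c_n=0$ for $n<0$. The Padovan numbers $p_n$ are defined by $p_n=\delta_{n,0}+p_{n-2}+p_{n-3}$ for $n\ge0$, $p_n=0$ for $n<0$. $\delta_{i,j}$ is $1$ if $i=j$ and $0$ otherwise. Empty sums are $0$. *)

theory Defs
  imports Main
begin

function cows :: "int \<Rightarrow> int" where
  "cows n = (if n < 0 then 0
             else (if n = 0 then 1 else 0) + cows (n - 1) + cows (n - 3))"
  by auto
termination by (relation "measure (\<lambda>n. nat (n + 1))") auto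

function padovan :: "int \<Rightarrow> int" where
  "padovan n = (if n < 0 then 0
             else (if n = 0 then 1 else 0) + padovan (n - 2) + padovan (n - 3))"
  by auto
termination by (relation "measure (\<lambda>n. nat (n + 1))") auto

end

theory Submission
  imports Defs
begin

text \<open>
  Convolve the Padovan numbers with the squared cows numbers,
  \<open>F n = (\<Sum>l=0..n. p l * c (n - l)\<^sup>2)\<close>.  The Padovan recurrence gives
  \<open>F n = c n\<^sup>2 + F (n - 2) + F (n - 3)\<close>, and the cows recurrence shows that
  \<open>c n * (c n + c (n - 2))\<close> satisfies the same recurrence, so the two agree.
  Since \<open>p 0 = 1\<close> and \<open>p 1 = 0\<close>, this says \<open>c n * c (n - 2) = (\<Sum>l=2..n. p l * c (n - l)\<^sup>2)\<close>;
  the theorem follows by squaring \<open>c n = c (n - 1) + c (n - 3)\<close> for \<open>n \<ge> 1\<close>.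
\<close>

declare cows.simps [simp del] padovan.simps [simp del]

lemma cows_neg: "n < 0 \<Longrightarrow> cows n = 0"
  by (subst cows.simps) simp

lemma cows_unfold: "cows n = (if n = 0 then 1 else 0) + cows (n - 1) + cows (n - 3)"
  using cows.simps[of n] by (auto simp: cows_neg)

text \<open>At \<open>k = 0\<close> the Kronecker delta of the recurrence is killed by the factor \<open>cows (- d) = 0\<close>.\<close>
lemma cows_mult_recurrence:
  assumes "d > 0"
  shows "cows (k - d) * (cows (k - 1) + cows (k - 3)) = cows (k - d) * cows k"
  using assms cows_unfold[of k] by (cases "k = 0") (auto simp: cows_neg)

lemma padovan_neg: "n < 0 \<Longrightarrow> padovan n = 0"
  by (subst padovan.simps) simp

lemma padovan_unfold: "padovan n = (if n = 0 then 1 else 0) + padovan (n - 2) + padovan (n - 3)"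
  using padovan.simps[of n] by (auto simp: padovan_neg)

lemma padovan_1: "padovan 1 = 0"
  using padovan_unfold[of 1] by (simp add: padovan_neg)

lemma sum_atLeastAtMost_int_shift:
  fixes a b d :: int
  shows "(\<Sum>l\<in>{a + d..b + d}. f l) = (\<Sum>l\<in>{a..b}. f (l + d))"
  using sum.reindex[of "\<lambda>l. l + d" "{a..b}" f] by simp

definition padovan_conv :: "(int \<Rightarrow> int) \<Rightarrow> int \<Rightarrow> int" where
  "padovan_conv a n = (\<Sum>l\<in>{0..n}. padovan l * a (n - l))"

lemma padovan_conv_neg: "n < 0 \<Longrightarrow> padovan_conv a n = 0"
  by (simp add: padovan_conv_def)

lemma sum_padovan_shifted:
  assumes "d \<ge> 0"
  shows "(\<Sum>l\<in>{0..n}. padovan (l - d) * a (n - l)) = padovan_conv a (n - d)"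
proof -
  have "(\<Sum>l\<in>{0..n}. padovan (l - d) * a (n - l)) = (\<Sum>l\<in>{-d..n - d}. padovan l * a (n - d - l))"
    using sum_atLeastAtMost_int_shift[where f = "\<lambda>l. padovan (l - d) * a (n - l)"
        and a = "-d" and b = "n - d" and d = d]
    by (simp add: diff_diff_eq add.commute)
  also have "\<dots> = padovan_conv a (n - d)"
    unfolding padovan_conv_def using assms
    by (intro sum.mono_neutral_right) (auto simp: padovan_neg)
  finally show ?thesis .
qed

lemma padovan_conv_unfold:
  assumes "n \<ge> 0"
  shows "padovan_conv a n = a n + padovan_conv a (n - 2) + padovan_conv a (n - 3)"
proof -
  have "padovan_conv a n = (\<Sum>l\<in>{0..n}. (if l = 0 then a n else 0)
          + padovan (l - 2) * a (n - l) + padovan (l - 3) * a (n - l))"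
    unfolding padovan_conv_def
    by (intro sum.cong refl, subst padovan_unfold) (simp add: algebra_simps)
  also have "\<dots> = a n + padovan_conv a (n - 2) + padovan_conv a (n - 3)"
    using assms by (simp add: sum.distrib sum_padovan_shifted)
  finally show ?thesis .
qed

lemma padovan_conv_cows_sq: "padovan_conv (\<lambda>k. (cows k)^2) n = cows n * (cows n + cows (n - 2))"
proof (induction "nat (n + 1)" arbitrary: n rule: less_induct)
  case less
  show ?case
  proof (cases "n < 0")
    case True
    then show ?thesis by (simp add: padovan_conv_neg cows_neg)
  next
    case False
    have "padovan_conv (\<lambda>k. (cows k)^2) n
        = (cows n)^2 + padovan_conv (\<lambda>k. (cows k)^2) (n - 2) + padovan_conv (\<lambda>k. (cows k)^2) (n - 3)"
      using False by (simp add: padovan_conv_unfold)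
    also have "\<dots> = (cows n)^2 + cows (n - 2) * (cows (n - 2) + cows (n - 4))
                     + cows (n - 3) * (cows (n - 3) + cows (n - 5))"
      using less[of "n - 2"] less[of "n - 3"] False by (simp add: algebra_simps)
    also have "\<dots> = (cows n)^2 + cows (n - 2) * (cows (n - 1) + cows (n - 3))"
      using cows_mult_recurrence[of 1 "n - 1"] cows_mult_recurrence[of 1 "n - 2"]
      by (simp add: algebra_simps)
    also have "\<dots> = cows n * (cows n + cows (n - 2))"
      by (subst cows_mult_recurrence) (simp_all add: power2_eq_square algebra_simps)
    finally show ?thesis .
  qed
qed

lemma cows_mult_cows_minus_2: "cows n * cows (n - 2) = (\<Sum>l\<in>{2..n}. padovan l * (cows (n - l))^2)"
proof (cases "n < 0")
  case True
  then show ?thesis by (simp add: cows_neg)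
next
  case False
  then have "{0..n} = insert 0 {1..n}" by auto
  then have "padovan_conv (\<lambda>k. (cows k)^2) n = (cows n)^2 + (\<Sum>l\<in>{1..n}. padovan l * (cows (n - l))^2)"
    unfolding padovan_conv_def using padovan_unfold[of 0] by (simp add: padovan_neg)
  also have "(\<Sum>l\<in>{1..n}. padovan l * (cows (n - l))^2) = (\<Sum>l\<in>{2..n}. padovan l * (cows (n - l))^2)"
  proof (rule sum.mono_neutral_right)
    show "\<forall>l\<in>{1..n} - {2..n}. padovan l * (cows (n - l))^2 = 0"
    proof
      fix l
      assume "l \<in> {1..n} - {2..n}"
      then have "l = 1" by auto
      then show "padovan l * (cows (n - l))^2 = 0" by (simp add: padovan_1)
    qed
  qed auto
  finally show ?thesis
    by (simp only: padovan_conv_cows_sq) (simp add: power2_eq_square algebra_simps)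
qed

theorem mainTheorem12:
  fixes n :: int
  assumes "n \<ge> 0"
  shows "(cows n)^2 = (if n = 0 then 1 else 0) + (cows (n - 1))^2 + (cows (n - 3))^2
           + 2 * (\<Sum>l\<in>{3..n}. padovan (l - 1) * (cows (n - l))^2)"
proof -
  have "(\<Sum>l\<in>{3..n}. padovan (l - 1) * (cows (n - l))^2)
      = (\<Sum>l\<in>{2..n - 1}. padovan l * (cows (n - 1 - l))^2)"
    using sum_atLeastAtMost_int_shift[where f = "\<lambda>l. padovan (l - 1) * (cows (n - l))^2"
        and a = 2 and b = "n - 1" and d = 1]
    by (simp add: diff_diff_eq add.commute)
  also have "\<dots> = cows (n - 1) * cows (n - 3)"
    using cows_mult_cows_minus_2[of "n - 1"] by simp
  finally show ?thesis
    using assms cows_unfold[of n] by (cases "n = 0") (auto simp: cows_neg power2_eq_square algebra_simps)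
qed

end
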